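(* Let $K=\{p_1,\dots,p_N\}\subset\mathbb{R}^d$ be finite. Then: (i) $\eta$ is constant on each Voronoi cell, hence has finite range $\mathcal{E}$; (ii) $\{Q_\eta\}_{\eta\in\mathcal{E}}$ is a partition of $\mathbb{R}^d$, and $x\in Q_\eta$ if and only if $\nabla f(x)=\eta-x$; (iii) for every $\eta\in\mathcal{E}$, both $Q_\eta$ and $P_\eta$ are unions of Voronoi cells, and $Q_\eta\subseteq P_\eta$; (iv) for every $\eta\in\mathcal{E}$, $P_\eta$ is a polyhedron; (v) with $\beta:=\min\{|\eta-\bar\eta|^2:\eta,\bar\eta\in\mathcal{E},\eta\ne\bar\eta\}>0$, one has $|\bar\eta-x|^2\ge|\eta-x|^2+\beta$ for all distinct $\eta,\bar\eta\in\mathcal{E}$ and all $x\in Q_\eta\cap P_{\bar\eta}$.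
   Context: $K=\{p_1,\dots,p_N\}\subset\mathbb{R}^d$ consists of $N$ distinct points. $f(x):=-\tfrac12\operatorname{dist}_K(x)^2$, $g(x):=\max_{y\in K}(x\cdot y-\tfrac12|y|^2)$ (convex, with convex subdifferential $\partial g$). $\operatorname{opt}(x):=\{y\in K:|x-y|=\operatorname{dist}_K(x)\}$ and $\eta(x)$ is the orthogonal projection of $x$ onto $\operatorname{conv}(\operatorname{opt}(x))$. $\nabla f(x)$ is the minimal-norm element of $\partial f(x):=\{\xi: f(y)\ge f(x)+\xi\cdot(y-x)-\tfrac12|y-x|^2\ \forall y\}$. For $H\subseteq K$ the Voronoi cell is $V_H:=\{x:\operatorname{opt}(x)=H\}$. For $\eta\in\mathbb{R}^d$: $Q_\eta:=\{x:\eta(x)=\eta\}$ (potential zone) and $P_\eta:=\{x:\eta\in\partial g(x)\}$. A polyhedron is a nonempty closed convex set of the form $\bigcap_{j=1}^\ell\{x:T_j(x)\le0\}$ with $T_j$ affine. *)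

theory Defs
  imports "HOL-Analysis.Analysis"
begin

definition vf :: "'a::euclidean_space set \<Rightarrow> 'a \<Rightarrow> real" where
  "vf K x = - (1/2) * (infdist x K)\<^sup>2"

definition vg :: "'a::euclidean_space set \<Rightarrow> 'a \<Rightarrow> real" where
  "vg K x = Max ((\<lambda>y. x \<bullet> y - (1/2) * (norm y)\<^sup>2) ` K)"

definition subdiff_g :: "'a::euclidean_space set \<Rightarrow> 'a \<Rightarrow> 'a set" where
  "subdiff_g K x = {\<xi>. \<forall>y. vg K y \<ge> vg K x + \<xi> \<bullet> (y - x)}"

definition vopt :: "'a::euclidean_space set \<Rightarrow> 'a \<Rightarrow> 'a set" where
  "vopt K x = {y \<in> K. dist x y = infdist x K}"

definition veta :: "'a::euclidean_space set \<Rightarrow> 'a \<Rightarrow> 'a" where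
  "veta K x = closest_point (convex hull (vopt K x)) x"

definition subdiff_f :: "'a::euclidean_space set \<Rightarrow> 'a \<Rightarrow> 'a set" where
  "subdiff_f K x = {\<xi>. \<forall>y. vf K y \<ge> vf K x + \<xi> \<bullet> (y - x) - (1/2) * (norm (y - x))\<^sup>2}"

definition grad_f :: "'a::euclidean_space set \<Rightarrow> 'a \<Rightarrow> 'a" where
  "grad_f K x = (THE \<xi>. \<xi> \<in> subdiff_f K x \<and> (\<forall>\<zeta>\<in>subdiff_f K x. norm \<xi> \<le> norm \<zeta>))"

definition voronoi :: "'a::euclidean_space set \<Rightarrow> 'a set \<Rightarrow> 'a set" where
  "voronoi K H = {x. vopt K x = H}"

definition Qzone :: "'a::euclidean_space set \<Rightarrow> 'a \<Rightarrow> 'a set" where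
  "Qzone K e = {x. veta K x = e}"

definition Pzone :: "'a::euclidean_space set \<Rightarrow> 'a \<Rightarrow> 'a set" where
  "Pzone K e = {x. e \<in> subdiff_g K x}"

text \<open>Polyhedron in the paper's sense: nonempty, and a finite intersection of
  half-spaces (library notion, closed convex automatically).\<close>
definition polyhedron_ne :: "'a::euclidean_space set \<Rightarrow> bool" where
  "polyhedron_ne S \<longleftrightarrow> polyhedron S \<and> S \<noteq> {}"

end

theory Submission
  imports Defs
begin

text \<open>Writing g as the maximum over y \<in> K of the affine functions x \<bullet> y - |y|^2/2, one has
  f = g - |x|^2/2 and opt(x) is the set of maximising y. Danskin's formula
  \<partial>g(x) = conv(opt(x)) then gives \<partial>f(x) = conv(opt(x)) - x, whose minimal-norm element is
  \<eta>(x) - x. Inside a Voronoi cell all points of opt(x) are equidistant from x, so moving x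
  within the cell changes the squared distance to conv(opt(x)) only by a constant and leaves
  the projection \<eta>(x) unchanged; hence \<eta> takes finitely many values. P_\<eta> is the set where
  the convex function g - \<eta> \<bullet> x is minimal, a sublevel set of a finite maximum of affine
  functions, hence a polyhedron, and (v) is the obtuse-angle property of the projection onto
  conv(opt(x)).\<close>

definition vg_piece :: "'a::euclidean_space \<Rightarrow> 'a \<Rightarrow> real" where
  "vg_piece x y = x \<bullet> y - (1/2) * (norm y)\<^sup>2"

lemma vg_piece_shift: "vg_piece y a = vg_piece x a + (y - x) \<bullet> a"
  unfolding vg_piece_def by (simp add: inner_diff_left)

lemma power2_dist_eq_inner: "(dist x y)\<^sup>2 = x \<bullet> x - 2 * (x \<bullet> y) + y \<bullet> (y::'a::real_inner)"
  by (simp add: dist_norm power2_norm_eq_inner inner_diff_left inner_diff_right inner_commute)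

lemma dist_le_iff_vg_piece_ge: "dist x y \<le> dist x z \<longleftrightarrow> vg_piece x z \<le> vg_piece x y"
proof -
  have "dist x y \<le> dist x z \<longleftrightarrow> (dist x y)\<^sup>2 \<le> (dist x z)\<^sup>2"
    by (simp add: power_mono_iff)
  also have "\<dots> \<longleftrightarrow> vg_piece x z \<le> vg_piece x y"
    unfolding power2_dist_eq_inner vg_piece_def by (simp add: power2_norm_eq_inner) linarith
  finally show ?thesis .
qed

lemma vg_piece_le_vg: "finite K \<Longrightarrow> y \<in> K \<Longrightarrow> vg_piece x y \<le> vg K x"
  unfolding vg_def vg_piece_def by (rule Max_ge) auto

lemma vg_attained:
  assumes "finite K" "K \<noteq> {}"
  obtains y where "y \<in> K" "vg K x = vg_piece x y"
proof -
  have "vg K x \<in> vg_piece x ` K"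
    unfolding vg_def vg_piece_def using assms by (intro Max_in) auto
  then show ?thesis using that by blast
qed

lemma infdist_attained_finite:
  fixes K :: "'a::heine_borel set"
  assumes "finite K" "K \<noteq> {}"
  obtains y where "y \<in> K" "infdist x K = dist x y"
  using infdist_attains_inf[of K x] assms finite_imp_closed by blast

lemma vopt_subset: "vopt K x \<subseteq> K"
  unfolding vopt_def by auto

lemma vopt_nonempty: "finite K \<Longrightarrow> K \<noteq> {} \<Longrightarrow> vopt K x \<noteq> {}"
  unfolding vopt_def by (metis (mono_tags, lifting) empty_Collect_eq infdist_attained_finite)

lemma finite_vopt: "finite K \<Longrightarrow> finite (vopt K x)"
  using vopt_subset finite_subset by blast

lemma vopt_eq_argmax_vg_piece:
  assumes "finite K" "K \<noteq> {}"
  shows "vopt K x = {y\<in>K. vg_piece x y = vg K x}"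
proof -
  obtain y0 where y0: "y0 \<in> K" "infdist x K = dist x y0"
    using infdist_attained_finite[OF assms] .
  obtain y1 where y1: "y1 \<in> K" "vg K x = vg_piece x y1"
    using vg_attained[OF assms] .
  have "dist x y = infdist x K \<longleftrightarrow> (\<forall>z\<in>K. vg_piece x z \<le> vg_piece x y)" if "y \<in> K" for y
    using that y0 infdist_le[of _ K x] dist_le_iff_vg_piece_ge
    by (metis antisym)
  also have "(\<forall>z\<in>K. vg_piece x z \<le> vg_piece x y) \<longleftrightarrow> vg_piece x y = vg K x" if "y \<in> K" for y
    using that y1 vg_piece_le_vg[OF assms(1)] by (metis antisym)
  finally show ?thesis
    unfolding vopt_def by blast
qed

lemma vf_eq_vg:
  assumes "finite K" "K \<noteq> {}"
  shows "vf K x = vg K x - (1/2) * (norm x)\<^sup>2"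
proof -
  obtain y0 where y0: "y0 \<in> K" "infdist x K = dist x y0"
    using infdist_attained_finite[OF assms] .
  then have "y0 \<in> vopt K x"
    unfolding vopt_def by simp
  then have "vg K x = vg_piece x y0"
    using vopt_eq_argmax_vg_piece[OF assms] by auto
  then show ?thesis
    unfolding vf_def y0(2) power2_dist_eq_inner vg_piece_def
    by (simp add: power2_norm_eq_inner algebra_simps)
qed

lemma closed_convex_hull_vopt: "finite K \<Longrightarrow> closed (convex hull (vopt K x))"
  by (simp add: finite_vopt compact_convex_hull finite_imp_compact compact_imp_closed)

lemma convex_subdiff_g: "convex (subdiff_g K x)"
  unfolding convex_def
proof (intro allI impI ballI)
  fix a b :: 'a and u v :: real
  assume a: "a \<in> subdiff_g K x" and b: "b \<in> subdiff_g K x"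
    and uv: "0 \<le> u" "0 \<le> v" "u + v = 1"
  then have v: "v = 1 - u" by simp
  show "u *\<^sub>R a + v *\<^sub>R b \<in> subdiff_g K x"
    unfolding subdiff_g_def
  proof (intro CollectI allI)
    fix y
    have "u * (vg K x + a \<bullet> (y - x)) + v * (vg K x + b \<bullet> (y - x)) \<le> u * vg K y + v * vg K y"
      using a b uv(1,2) unfolding subdiff_g_def by (intro add_mono mult_left_mono) auto
    then show "vg K x + (u *\<^sub>R a + v *\<^sub>R b) \<bullet> (y - x) \<le> vg K y"
      unfolding v by (simp add: inner_add_left algebra_simps)
  qed
qed

text \<open>Only the pieces indexed by opt(x) are active at x; the others stay strictly below
  vg for small steps, by continuity.\<close>
lemma vg_below_along_direction:
  assumes "finite K" "K \<noteq> {}" "\<forall>c\<in>vopt K x. v \<bullet> c < s"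
  obtains t where "t > 0" "vg K (x + t *\<^sub>R v) < vg K x + t * s"
proof -
  have pieces: "\<forall>\<^sub>F t in at_right (0::real). vg_piece x k + t * (v \<bullet> k) < vg K x + t * s"
    if k: "k \<in> K" for k
  proof (cases "k \<in> vopt K x")
    case True
    then have "vg_piece x k = vg K x" "v \<bullet> k < s"
      using vopt_eq_argmax_vg_piece[OF assms(1,2)] assms(3) by auto
    then show ?thesis
      using eventually_at_right_less[of "0::real"]
      by (elim eventually_mono) (auto simp: mult_strict_left_mono)
  next
    case False
    then have "vg_piece x k + 0 * (v \<bullet> k) < vg K x + 0 * s"
      using vopt_eq_argmax_vg_piece[OF assms(1,2)] vg_piece_le_vg[OF assms(1) k, of x] k
      by auto
    moreover have "((\<lambda>t. vg K x + t * s - (vg_piece x k + t * (v \<bullet> k)))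
        \<longlongrightarrow> vg K x + 0 * s - (vg_piece x k + 0 * (v \<bullet> k))) (at_right 0)"
      by (intro tendsto_intros)
    ultimately have "\<forall>\<^sub>F t in at_right 0. 0 < vg K x + t * s - (vg_piece x k + t * (v \<bullet> k))"
      by (intro order_tendstoD) auto
    then show ?thesis by eventually_elim simp
  qed
  have "\<forall>\<^sub>F t in at_right (0::real). \<forall>k\<in>K. vg_piece x k + t * (v \<bullet> k) < vg K x + t * s"
    by (rule eventually_ball_finite[OF assms(1)]) (use pieces in blast)
  moreover have "\<forall>\<^sub>F t in at_right (0::real). t > 0"
    by (simp add: eventually_at_right_less)
  ultimately have "\<forall>\<^sub>F t in at_right (0::real). t > 0 \<and>
      (\<forall>k\<in>K. vg_piece x k + t * (v \<bullet> k) < vg K x + t * s)"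
    by eventually_elim auto
  then obtain t where t: "t > 0" "\<forall>k\<in>K. vg_piece x k + t * (v \<bullet> k) < vg K x + t * s"
    using eventually_happens'[OF trivial_limit_at_right_real] by blast
  obtain k where "k \<in> K" "vg K (x + t *\<^sub>R v) = vg_piece (x + t *\<^sub>R v) k"
    using vg_attained[OF assms(1,2)] .
  with t have "vg K (x + t *\<^sub>R v) < vg K x + t * s"
    using vg_piece_shift[of "x + t *\<^sub>R v" k x] by simp
  with t(1) show ?thesis using that by blast
qed

lemma subdiff_g_eq_convex_hull_vopt:
  assumes "finite K" "K \<noteq> {}"
  shows "subdiff_g K x = convex hull (vopt K x)"
proof
  show "convex hull (vopt K x) \<subseteq> subdiff_g K x"
  proof (rule hull_minimal)
    show "convex (subdiff_g K x)"
      by (rule convex_subdiff_g)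
  next
    show "vopt K x \<subseteq> subdiff_g K x"
    proof
      fix a assume "a \<in> vopt K x"
      then have a: "a \<in> K" "vg_piece x a = vg K x"
        using vopt_eq_argmax_vg_piece[OF assms] by auto
      show "a \<in> subdiff_g K x"
        unfolding subdiff_g_def
      proof (intro CollectI allI)
        fix y
        have "vg_piece y a \<le> vg K y"
          using vg_piece_le_vg[OF assms(1) a(1)] .
        then show "vg K x + a \<bullet> (y - x) \<le> vg K y"
          using vg_piece_shift[of y a x] a(2) by (simp add: inner_commute)
      qed
    qed
  qed
next
  show "subdiff_g K x \<subseteq> convex hull (vopt K x)"
  proof
    fix \<xi> assume \<xi>: "\<xi> \<in> subdiff_g K x"
    show "\<xi> \<in> convex hull (vopt K x)"
    proof (rule ccontr)
      assume "\<xi> \<notin> convex hull (vopt K x)"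
      then obtain a b where sep: "a \<bullet> \<xi> < b" "\<forall>c\<in>convex hull (vopt K x). b < a \<bullet> c"
        using separating_hyperplane_closed_point[OF convex_convex_hull
            closed_convex_hull_vopt[OF assms(1), of x]] by blast
      have "\<forall>c\<in>vopt K x. (- a) \<bullet> c < (- a) \<bullet> \<xi>"
      proof
        fix c assume "c \<in> vopt K x"
        then have "c \<in> convex hull (vopt K x)"
          by (rule hull_inc)
        then have "b < a \<bullet> c"
          using sep(2) by blast
        with sep(1) show "(- a) \<bullet> c < (- a) \<bullet> \<xi>"
          by simp
      qed
      then obtain t where t: "t > 0" "vg K (x + t *\<^sub>R - a) < vg K x + t * ((- a) \<bullet> \<xi>)"
        using vg_below_along_direction[OF assms] by blast
      moreover have "vg K x + \<xi> \<bullet> ((x + t *\<^sub>R - a) - x) \<le> vg K (x + t *\<^sub>R - a)"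
        using \<xi> unfolding subdiff_g_def by blast
      ultimately show False
        by (simp add: inner_commute)
    qed
  qed
qed

lemma subdiff_f_eq:
  assumes "finite K" "K \<noteq> {}"
  shows "subdiff_f K x = {\<xi>. \<xi> + x \<in> convex hull (vopt K x)}"
proof -
  have "vf K x + \<xi> \<bullet> (y - x) - (1/2) * (norm (y - x))\<^sup>2 \<le> vf K y \<longleftrightarrow>
        vg K x + (\<xi> + x) \<bullet> (y - x) \<le> vg K y" for \<xi> y
    unfolding vf_eq_vg[OF assms] power2_norm_eq_inner
    by (simp add: inner_add_left inner_diff_left inner_diff_right inner_commute algebra_simps)
  then show ?thesis
    unfolding subdiff_f_def subdiff_g_eq_convex_hull_vopt[OF assms, symmetric] subdiff_g_def
    by simp
qed

lemma min_norm_offset_eq_closest_point: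
  fixes C :: "'a::euclidean_space set"
  assumes "closed C" "convex C" "C \<noteq> {}"
  shows "(THE \<xi>. \<xi> \<in> {\<xi>. \<xi> + x \<in> C} \<and> (\<forall>\<zeta>\<in>{\<xi>. \<xi> + x \<in> C}. norm \<xi> \<le> norm \<zeta>))
    = closest_point C x - x"
proof (rule the_equality)
  have "norm (closest_point C x - x) \<le> norm \<zeta>" if "\<zeta> + x \<in> C" for \<zeta>
  proof -
    have "dist x (closest_point C x) \<le> dist x (\<zeta> + x)"
      by (rule closest_point_le[OF assms(1) that])
    then show ?thesis
      by (simp add: dist_norm norm_minus_commute)
  qed
  then show "closest_point C x - x \<in> {\<xi>. \<xi> + x \<in> C} \<and>
      (\<forall>\<zeta>\<in>{\<xi>. \<xi> + x \<in> C}. norm (closest_point C x - x) \<le> norm \<zeta>)"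
    using closest_point_in_set[OF assms(1,3)] by simp
next
  fix \<xi> assume \<xi>: "\<xi> \<in> {\<xi>. \<xi> + x \<in> C} \<and> (\<forall>\<zeta>\<in>{\<xi>. \<xi> + x \<in> C}. norm \<xi> \<le> norm \<zeta>)"
  then have "\<forall>z\<in>C. dist x (\<xi> + x) \<le> dist x z"
    by (metis (mono_tags) diff_add_cancel dist_norm mem_Collect_eq norm_minus_commute
        add_diff_cancel_right')
  then have "\<xi> + x = closest_point C x"
    using closest_point_unique[OF assms(2,1)] \<xi> by blast
  then show "\<xi> = closest_point C x - x"
    by (simp add: eq_diff_eq)
qed

lemma grad_f_eq_veta_minus:
  assumes "finite K" "K \<noteq> {}"
  shows "grad_f K x = veta K x - x"
  unfolding grad_f_def subdiff_f_eq[OF assms] veta_def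
  by (rule min_norm_offset_eq_closest_point)
    (simp_all add: closed_convex_hull_vopt[OF assms(1)] vopt_nonempty[OF assms])

lemma closest_point_eq_if_inner_const:
  fixes C :: "'a::euclidean_space set"
  assumes "closed C" "convex C" "C \<noteq> {}" "\<forall>z\<in>C. (x - x') \<bullet> z = c"
  shows "closest_point C x = closest_point C x'"
proof -
  define p where "p = closest_point C x'"
  have shift: "(dist x z)\<^sup>2 = (dist x' z)\<^sup>2 + (x \<bullet> x - x' \<bullet> x' - 2 * c)" if "z \<in> C" for z
    using assms(4) that unfolding power2_dist_eq_inner by (auto simp: inner_diff_left)
  have p: "p \<in> C"
    unfolding p_def using closest_point_in_set[OF assms(1,3)] .
  have "\<forall>z\<in>C. dist x p \<le> dist x z"
  proof
    fix z assume z: "z \<in> C"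
    have "(dist x' p)\<^sup>2 \<le> (dist x' z)\<^sup>2"
      unfolding p_def using closest_point_le[OF assms(1) z] by (simp add: power_mono)
    then have "(dist x p)\<^sup>2 \<le> (dist x z)\<^sup>2"
      using shift[OF z] shift[OF p] by linarith
    then show "dist x p \<le> dist x z"
      by (simp add: power_mono_iff)
  qed
  then have "p = closest_point C x"
    by (rule closest_point_unique[OF assms(2,1) p])
  then show ?thesis
    unfolding p_def by simp
qed

lemma veta_eq_if_vopt_eq:
  assumes "finite K" "K \<noteq> {}" "vopt K x = vopt K x'"
  shows "veta K x = veta K x'"
proof -
  obtain h0 where h0: "h0 \<in> vopt K x"
    using vopt_nonempty[OF assms(1,2)] by blast
  have "(x - x') \<bullet> h = (x - x') \<bullet> h0" if "h \<in> vopt K x" for h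
  proof -
    have "h \<in> vopt K x'" "h0 \<in> vopt K x'"
      using that h0 assms(3) by auto
    with that h0 have "(dist x h)\<^sup>2 = (dist x h0)\<^sup>2" "(dist x' h)\<^sup>2 = (dist x' h0)\<^sup>2"
      unfolding vopt_def by auto
    then show ?thesis
      unfolding power2_dist_eq_inner by (simp add: inner_diff_left)
  qed
  then have "convex hull (vopt K x) \<subseteq> {z. (x - x') \<bullet> z = (x - x') \<bullet> h0}"
    by (intro hull_minimal) (auto simp: convex_hyperplane)
  then have "\<forall>z\<in>convex hull (vopt K x). (x - x') \<bullet> z = (x - x') \<bullet> h0"
    by blast
  moreover have "convex hull (vopt K x) \<noteq> {}"
    using vopt_nonempty[OF assms(1,2)] by simp
  ultimately have "closest_point (convex hull (vopt K x)) x = closest_point (convex hull (vopt K x)) x'"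
    by (intro closest_point_eq_if_inner_const closed_convex_hull_vopt[OF assms(1)] convex_convex_hull)
  then show ?thesis
    unfolding veta_def assms(3) .
qed

lemma finite_range_veta:
  assumes "finite K" "K \<noteq> {}"
  shows "finite (range (veta K))"
proof -
  have "range (veta K) \<subseteq> (\<lambda>H. veta K (SOME x. vopt K x = H)) ` Pow K"
  proof
    fix e assume "e \<in> range (veta K)"
    then obtain x where x: "e = veta K x" by auto
    have "vopt K (SOME x'. vopt K x' = vopt K x) = vopt K x"
      by (rule someI) simp
    then have "e = veta K (SOME x'. vopt K x' = vopt K x)"
      unfolding x using veta_eq_if_vopt_eq[OF assms] by metis
    then show "e \<in> (\<lambda>H. veta K (SOME x. vopt K x = H)) ` Pow K"
      using vopt_subset by blast
  qed
  then show ?thesis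
    using assms(1) finite_subset by blast
qed

lemma union_of_voronoi_cells:
  assumes "\<And>x y. vopt K x = vopt K y \<Longrightarrow> x \<in> S \<Longrightarrow> y \<in> S"
  shows "\<exists>\<H>. \<H> \<subseteq> Pow K \<and> S = (\<Union>H\<in>\<H>. voronoi K H)"
proof (intro exI conjI)
  show "vopt K ` S \<subseteq> Pow K"
    using vopt_subset by blast
  show "S = (\<Union>H\<in>vopt K ` S. voronoi K H)"
    unfolding voronoi_def using assms by auto
qed

lemma Pzone_eq_convex_hull:
  assumes "finite K" "K \<noteq> {}"
  shows "Pzone K e = {x. e \<in> convex hull (vopt K x)}"
  unfolding Pzone_def subdiff_g_eq_convex_hull_vopt[OF assms] ..

lemma Qzone_subset_Pzone:
  assumes "finite K" "K \<noteq> {}"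
  shows "Qzone K e \<subseteq> Pzone K e"
  unfolding Pzone_eq_convex_hull[OF assms] Qzone_def veta_def
  using closest_point_in_set[OF closed_convex_hull_vopt[OF assms(1)]] vopt_nonempty[OF assms]
  by auto

text \<open>Having subgradient e means minimising vg - e \<bullet> x, a condition independent of
  the chosen minimiser x0.\<close>
lemma Pzone_eq_sublevel:
  assumes "x0 \<in> Pzone K e"
  shows "Pzone K e = {x. vg K x - e \<bullet> x \<le> vg K x0 - e \<bullet> x0}"
proof (intro set_eqI iffI)
  fix x assume "x \<in> Pzone K e"
  then have "vg K x + e \<bullet> (x0 - x) \<le> vg K x0"
    unfolding Pzone_def subdiff_g_def by auto
  then show "x \<in> {x. vg K x - e \<bullet> x \<le> vg K x0 - e \<bullet> x0}"
    by (simp add: inner_diff_right)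
next
  fix x assume x: "x \<in> {x. vg K x - e \<bullet> x \<le> vg K x0 - e \<bullet> x0}"
  have "vg K x + e \<bullet> (y - x) \<le> vg K y" for y
  proof -
    have "vg K x + e \<bullet> (y - x) \<le> vg K x0 + e \<bullet> (y - x0)"
      using x by (simp add: inner_diff_right)
    also have "\<dots> \<le> vg K y"
      using assms unfolding Pzone_def subdiff_g_def by auto
    finally show ?thesis .
  qed
  then show "x \<in> Pzone K e"
    unfolding Pzone_def subdiff_g_def by auto
qed

lemma polyhedron_vg_sublevel:
  assumes "finite K" "K \<noteq> {}"
  shows "polyhedron {x. vg K x - e \<bullet> x \<le> m}"
proof -
  have "vg K x - e \<bullet> x \<le> m \<longleftrightarrow> (\<forall>k\<in>K. (k - e) \<bullet> x \<le> m + (1/2) * (norm k)\<^sup>2)" for x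
    using assms unfolding vg_def
    by (simp add: Max_le_iff inner_diff_left inner_commute algebra_simps)
  then have "{x. vg K x - e \<bullet> x \<le> m} = (\<Inter>k\<in>K. {x. (k - e) \<bullet> x \<le> m + (1/2) * (norm k)\<^sup>2})"
    by auto
  then show ?thesis
    using assms(1) by (auto intro!: polyhedron_Inter polyhedron_halfspace_le)
qed

lemma closest_point_power2_dist_ge:
  fixes C :: "'a::euclidean_space set"
  assumes "convex C" "closed C" "y \<in> C"
  shows "(norm (y - a))\<^sup>2 \<ge> (norm (closest_point C a - a))\<^sup>2 + (norm (y - closest_point C a))\<^sup>2"
proof -
  define p where "p = closest_point C a"
  have "(a - p) \<bullet> (y - p) \<le> 0"
    unfolding p_def using closest_point_dot[OF assms] .
  moreover have "(norm (y - a))\<^sup>2 = (norm (p - a))\<^sup>2 + (norm (y - p))\<^sup>2 - 2 * ((a - p) \<bullet> (y - p))"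
    unfolding power2_norm_eq_inner
    by (simp add: inner_diff_left inner_diff_right inner_commute algebra_simps)
  ultimately show ?thesis
    unfolding p_def by linarith
qed

lemma Qzone_iff_grad_f:
  assumes "finite K" "K \<noteq> {}"
  shows "x \<in> Qzone K e \<longleftrightarrow> grad_f K x = e - x"
  unfolding Qzone_def grad_f_eq_veta_minus[OF assms] by auto

lemma Qzone_union_of_voronoi_cells:
  assumes "finite K" "K \<noteq> {}"
  shows "\<exists>\<H>. \<H> \<subseteq> Pow K \<and> Qzone K e = (\<Union>H\<in>\<H>. voronoi K H)"
  by (rule union_of_voronoi_cells) (auto simp: Qzone_def dest: veta_eq_if_vopt_eq[OF assms])

lemma Pzone_union_of_voronoi_cells:
  assumes "finite K" "K \<noteq> {}"
  shows "\<exists>\<H>. \<H> \<subseteq> Pow K \<and> Pzone K e = (\<Union>H\<in>\<H>. voronoi K H)"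
  by (rule union_of_voronoi_cells) (simp add: Pzone_eq_convex_hull[OF assms])

lemma polyhedron_ne_Pzone:
  assumes "finite K" "K \<noteq> {}" "e \<in> range (veta K)"
  shows "polyhedron_ne (Pzone K e)"
proof -
  obtain x0 where "x0 \<in> Pzone K e"
    using assms(3) Qzone_subset_Pzone[OF assms(1,2)] unfolding Qzone_def by blast
  then show ?thesis
    unfolding polyhedron_ne_def Pzone_eq_sublevel[OF \<open>x0 \<in> Pzone K e\<close>]
    using polyhedron_vg_sublevel[OF assms(1,2)] by blast
qed

lemma power2_dist_gap_Qzone_Pzone:
  assumes "finite K" "K \<noteq> {}" "x \<in> Qzone K e \<inter> Pzone K e'"
  shows "(norm (e' - x))\<^sup>2 \<ge> (norm (e - x))\<^sup>2 + (norm (e' - e))\<^sup>2"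
proof -
  have "e' \<in> convex hull (vopt K x)" "closest_point (convex hull (vopt K x)) x = e"
    using assms(3) unfolding Pzone_eq_convex_hull[OF assms(1,2)] Qzone_def veta_def by auto
  then show ?thesis
    using closest_point_power2_dist_ge[OF convex_convex_hull
        closed_convex_hull_vopt[OF assms(1), of x], of e' x]
    by simp
qed

lemma finite_pairwise_power2_dists:
  "finite E \<Longrightarrow> finite {(norm (e - e'))\<^sup>2 | e e'. e \<in> E \<and> e' \<in> E \<and> e \<noteq> e'}"
  by (rule finite_subset[of _ "(\<lambda>(e, e'). (norm (e - e'))\<^sup>2) ` (E \<times> E)"]) auto

lemma Min_pairwise_power2_dists_pos:
  fixes E :: "'a::real_normed_vector set"
  assumes "finite E" "card E \<ge> 2"
  shows "Min {(norm (e - e'))\<^sup>2 | e e'. e \<in> E \<and> e' \<in> E \<and> e \<noteq> e'} > 0"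
proof -
  have "\<exists>e\<in>E. \<exists>e'\<in>E. e \<noteq> e'"
    using assms card_le_Suc0_iff_eq[OF assms(1)] by auto
  then have "{(norm (e - e'))\<^sup>2 | e e'. e \<in> E \<and> e' \<in> E \<and> e \<noteq> e'} \<noteq> {}"
    by blast
  then show ?thesis
    using finite_pairwise_power2_dists[OF assms(1)] by auto
qed

theorem proposition3p5:
  fixes K :: "'a::euclidean_space set"
  assumes "finite K" and "K \<noteq> {}"
  shows
   "(\<forall>H x y. x \<in> voronoi K H \<and> y \<in> voronoi K H \<longrightarrow> veta K x = veta K y)
    \<and> finite (range (veta K))
    \<and> (\<Union>e\<in>range (veta K). Qzone K e) = UNIV
    \<and> (\<forall>e\<in>range (veta K). Qzone K e \<noteq> {})
    \<and> (\<forall>e\<in>range (veta K). \<forall>e'\<in>range (veta K). e \<noteq> e' \<longrightarrow> Qzone K e \<inter> Qzone K e' = {})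
    \<and> (\<forall>e\<in>range (veta K). \<forall>x. x \<in> Qzone K e \<longleftrightarrow> grad_f K x = e - x)
    \<and> (\<forall>e\<in>range (veta K).
          (\<exists>\<H>. \<H> \<subseteq> Pow K \<and> Qzone K e = (\<Union>H\<in>\<H>. voronoi K H))
        \<and> (\<exists>\<H>. \<H> \<subseteq> Pow K \<and> Pzone K e = (\<Union>H\<in>\<H>. voronoi K H))
        \<and> Qzone K e \<subseteq> Pzone K e)
    \<and> (\<forall>e\<in>range (veta K). polyhedron_ne (Pzone K e))
    \<and> (let E = range (veta K);
           \<beta> = Min {(norm (e - e'))\<^sup>2 | e e'. e \<in> E \<and> e' \<in> E \<and> e \<noteq> e'}
       in (card E \<ge> 2 \<longrightarrow> \<beta> > 0)
          \<and> (\<forall>e\<in>E. \<forall>e'\<in>E. e \<noteq> e' \<longrightarrow>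
               (\<forall>x \<in> Qzone K e \<inter> Pzone K e'. (norm (e' - x))\<^sup>2 \<ge> (norm (e - x))\<^sup>2 + \<beta>)))"
proof -
  define E where "E = range (veta K)"
  define \<beta> where "\<beta> = Min {(norm (e - e'))\<^sup>2 | e e'. e \<in> E \<and> e' \<in> E \<and> e \<noteq> e'}"
  have "finite E"
    unfolding E_def by (rule finite_range_veta[OF assms])
  have "\<beta> \<le> (norm (e' - e))\<^sup>2" if "e \<in> E" "e' \<in> E" "e \<noteq> e'" for e e'
    unfolding \<beta>_def using that finite_pairwise_power2_dists[OF \<open>finite E\<close>]
    by (intro Min_le) (auto simp: norm_minus_commute)
  then have gap: "let E = range (veta K);
           \<beta> = Min {(norm (e - e'))\<^sup>2 | e e'. e \<in> E \<and> e' \<in> E \<and> e \<noteq> e'}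
       in (card E \<ge> 2 \<longrightarrow> \<beta> > 0)
          \<and> (\<forall>e\<in>E. \<forall>e'\<in>E. e \<noteq> e' \<longrightarrow>
               (\<forall>x \<in> Qzone K e \<inter> Pzone K e'. (norm (e' - x))\<^sup>2 \<ge> (norm (e - x))\<^sup>2 + \<beta>))"
    unfolding Let_def E_def[symmetric] \<beta>_def[symmetric]
    using Min_pairwise_power2_dists_pos[OF \<open>finite E\<close>] power2_dist_gap_Qzone_Pzone[OF assms]
    by (fastforce simp: \<beta>_def)
  have cells: "\<forall>H x y. x \<in> voronoi K H \<and> y \<in> voronoi K H \<longrightarrow> veta K x = veta K y"
    unfolding voronoi_def using veta_eq_if_vopt_eq[OF assms] by auto
  have partition: "(\<Union>e\<in>range (veta K). Qzone K e) = UNIV"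
    "\<forall>e\<in>range (veta K). Qzone K e \<noteq> {}"
    "\<forall>e\<in>range (veta K). \<forall>e'\<in>range (veta K). e \<noteq> e' \<longrightarrow> Qzone K e \<inter> Qzone K e' = {}"
    unfolding Qzone_def by auto
  show ?thesis
    using Qzone_iff_grad_f[OF assms] Qzone_subset_Pzone[OF assms]
      Qzone_union_of_voronoi_cells[OF assms] Pzone_union_of_voronoi_cells[OF assms]
      polyhedron_ne_Pzone[OF assms]
    by (intro conjI cells finite_range_veta[OF assms] partition gap ballI allI) simp_all
qed

end
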